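(* Let $G$ be a finite connected $k$-regular simple graph on $n\ge 2$ vertices. Then $$h(G) < k\,\lambda(G)\sqrt{\frac{n}{\lfloor n/2\rfloor}}.$$
   Context: For a finite simple connected graph $G=(V,E)$ on $n$ vertices, the expansion constant is $h(G)=\min\{|\partial F|/|F| : F\subset V,\ 0<|F|\le n/2\}$, where $\partial F$ is the set of edges joining a vertex of $F$ to a vertex of $V\setminus F$. An $L(2,1)$-colouring of $G$ is a map $f:V\to\mathbb{Z}_{\ge 0}$ with $|f(u)-f(v)|\ge 2$ whenever $u,v$ are adjacent and $|f(u)-f(v)|\ge 1$ whenever $u,v$ are at distance two. Its span is $\max f-\min f$, and $\lambda(G)$ denotes the minimum span over all $L(2,1)$-colourings of $G$. *)

theory Defs
  imports "HOL-Analysis.Analysis"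
begin

definition simple_graph :: "'a set \<Rightarrow> ('a \<Rightarrow> 'a \<Rightarrow> bool) \<Rightarrow> bool" where
  "simple_graph V E \<longleftrightarrow> finite V \<and> (\<forall>u v. E u v \<longrightarrow> u \<in> V \<and> v \<in> V)
     \<and> (\<forall>u v. E u v \<longrightarrow> E v u) \<and> (\<forall>v. \<not> E v v)"

definition connected_graph :: "'a set \<Rightarrow> ('a \<Rightarrow> 'a \<Rightarrow> bool) \<Rightarrow> bool" where
  "connected_graph V E \<longleftrightarrow> (\<forall>u\<in>V. \<forall>v\<in>V. E\<^sup>*\<^sup>* u v)"

definition neighbours :: "'a set \<Rightarrow> ('a \<Rightarrow> 'a \<Rightarrow> bool) \<Rightarrow> 'a \<Rightarrow> 'a set" where
  "neighbours V E v = {u \<in> V. E v u}"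

definition regular :: "'a set \<Rightarrow> ('a \<Rightarrow> 'a \<Rightarrow> bool) \<Rightarrow> nat \<Rightarrow> bool" where
  "regular V E k \<longleftrightarrow> (\<forall>v\<in>V. card (neighbours V E v) = k)"

definition edge_boundary :: "'a set \<Rightarrow> ('a \<Rightarrow> 'a \<Rightarrow> bool) \<Rightarrow> 'a set \<Rightarrow> 'a set set" where
  "edge_boundary V E F = {{u, v} | u v. u \<in> F \<and> v \<in> V - F \<and> E u v}"

definition expansion_constant :: "'a set \<Rightarrow> ('a \<Rightarrow> 'a \<Rightarrow> bool) \<Rightarrow> real" where
  "expansion_constant V E =
     Min {real (card (edge_boundary V E F)) / real (card F) | F.
            F \<subseteq> V \<and> 0 < card F \<and> real (card F) \<le> real (card V) / 2}"

definition dist_two :: "('a \<Rightarrow> 'a \<Rightarrow> bool) \<Rightarrow> 'a \<Rightarrow> 'a \<Rightarrow> bool" where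
  "dist_two E u v \<longleftrightarrow> u \<noteq> v \<and> \<not> E u v \<and> (\<exists>w. E u w \<and> E w v)"

definition L21_colouring :: "'a set \<Rightarrow> ('a \<Rightarrow> 'a \<Rightarrow> bool) \<Rightarrow> ('a \<Rightarrow> nat) \<Rightarrow> bool" where
  "L21_colouring V E f \<longleftrightarrow>
     (\<forall>u\<in>V. \<forall>v\<in>V. E u v \<longrightarrow> \<bar>int (f u) - int (f v)\<bar> \<ge> 2) \<and>
     (\<forall>u\<in>V. \<forall>v\<in>V. dist_two E u v \<longrightarrow> \<bar>int (f u) - int (f v)\<bar> \<ge> 1)"

definition span :: "'a set \<Rightarrow> ('a \<Rightarrow> nat) \<Rightarrow> nat" where
  "span V f = Max (f ` V) - Min (f ` V)"

definition lambda21 :: "'a set \<Rightarrow> ('a \<Rightarrow> 'a \<Rightarrow> bool) \<Rightarrow> nat" where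
  "lambda21 V E = (LEAST s. \<exists>f. L21_colouring V E f \<and> span V f = s)"

end

theory Submission
  imports Defs
begin

text \<open>A single vertex is an admissible set in the definition of
  the expansion constant, with exactly k boundary edges, so h(G) \<le> k. The two ends of any edge
  need colours at distance at least 2, so \<lambda>(G) \<ge> 2, and the square-root factor is at least 1.
  Connectedness on at least two vertices supplies an edge, and with it k > 0, which makes the
  inequality k < 2k strict.\<close>

lemma expansion_constant_le_card_neighbours:
  assumes "simple_graph V E" and "u \<in> V" and "card V \<ge> 2"
  shows "expansion_constant V E \<le> real (card (neighbours V E u))"
proof -
  have fin: "finite V" and irr: "\<And>v. \<not> E v v"
    using assms(1) unfolding simple_graph_def by auto
  define admissible where "admissible = {F. F \<subseteq> V \<and> 0 < card F \<and> real (card F) \<le> real (card V) / 2}"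
  define ratio where "ratio F = real (card (edge_boundary V E F)) / real (card F)" for F
  have "expansion_constant V E = Min (ratio ` admissible)"
    unfolding expansion_constant_def admissible_def ratio_def by (rule arg_cong[where f = Min]) auto
  moreover have "finite (ratio ` admissible)"
    using fin unfolding admissible_def by simp
  moreover have "{u} \<in> admissible"
    using assms(2,3) unfolding admissible_def by auto
  ultimately have "expansion_constant V E \<le> ratio {u}"
    by simp
  also have "edge_boundary V E {u} = (\<lambda>x. {u, x}) ` neighbours V E u"
    unfolding edge_boundary_def neighbours_def using irr by auto
  then have "ratio {u} \<le> real (card (neighbours V E u))"
    unfolding ratio_def by (simp add: card_image_le fin neighbours_def)
  finally show ?thesis .
qed

lemma L21_colouring_exists:
  assumes "finite V" and "\<And>v. \<not> E v v"
  shows "\<exists>f. L21_colouring V E f"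
proof -
  obtain g where "bij_betw g V {0..<card V}"
    using ex_bij_betw_finite_nat[OF assms(1)] by blast
  then have "inj_on g V"
    by (rule bij_betw_imp_inj_on)
  then have "L21_colouring V E (\<lambda>x. 2 * g x)"
    unfolding L21_colouring_def dist_two_def inj_on_def using assms(2) by fastforce
  then show ?thesis by blast
qed

lemma lambda21_ge_2:
  assumes "simple_graph V E" and "E u w"
  shows "lambda21 V E \<ge> 2"
proof -
  have fin: "finite V" and uV: "u \<in> V" and wV: "w \<in> V" and irr: "\<And>v. \<not> E v v"
    using assms unfolding simple_graph_def by auto
  obtain f where f: "L21_colouring V E f" and span_f: "span V f = lambda21 V E"
  proof -
    obtain f0 where "L21_colouring V E f0"
      using L21_colouring_exists[of V E] fin irr by blast
    then have "\<exists>s f. L21_colouring V E f \<and> span V f = s"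
      by blast
    from LeastI_ex[OF this] show ?thesis
      using that unfolding lambda21_def by blast
  qed
  have "\<bar>int (f u) - int (f w)\<bar> \<ge> 2"
    using f assms(2) uV wV unfolding L21_colouring_def by auto
  moreover have "f u \<in> {Min (f ` V)..Max (f ` V)}" "f w \<in> {Min (f ` V)..Max (f ` V)}"
    using fin uV wV by auto
  ultimately show ?thesis
    using span_f unfolding span_def by auto
qed

lemma connected_graph_has_edge:
  assumes "connected_graph V E" and "card V \<ge> 2"
  obtains u w where "E u w"
proof -
  obtain a b where "a \<in> V" "b \<in> V" "a \<noteq> b"
    using assms(2) by (metis card_2_iff' card_le_Suc_iff numeral_2_eq_2 insertCI)
  then have "E\<^sup>*\<^sup>* a b"
    using assms(1) unfolding connected_graph_def by auto
  with \<open>a \<noteq> b\<close> show ?thesis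
    using that by (metis converse_rtranclpE)
qed

lemma regular_degree_pos:
  assumes "simple_graph V E" and "regular V E k" and "E u w"
  shows "k > 0"
proof -
  have "u \<in> V" "w \<in> neighbours V E u" "finite (neighbours V E u)"
    using assms(1,3) unfolding simple_graph_def neighbours_def by auto
  then show ?thesis
    using assms(2) unfolding regular_def by (metis card_gt_0_iff empty_iff)
qed

theorem theorem2p2:
  fixes V :: "'a set" and E :: "'a \<Rightarrow> 'a \<Rightarrow> bool" and k :: nat
  assumes "simple_graph V E"
    and "connected_graph V E"
    and "regular V E k"
    and "card V \<ge> 2"
  shows "expansion_constant V E
           < real k * real (lambda21 V E) * sqrt (real (card V) / real (card V div 2))"
proof -
  obtain u w where uw: "E u w"
    using connected_graph_has_edge[OF assms(2,4)] .
  have "u \<in> V"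
    using assms(1) uw unfolding simple_graph_def by blast
  then have "expansion_constant V E \<le> real k"
    using expansion_constant_le_card_neighbours[OF assms(1) _ assms(4)] assms(3)
    unfolding regular_def by auto
  also have "\<dots> < real k * 2"
    using regular_degree_pos[OF assms(1,3) uw] by simp
  also have "\<dots> \<le> real k * real (lambda21 V E)"
    using lambda21_ge_2[OF assms(1) uw] by (intro mult_left_mono) auto
  also have "\<dots> \<le> real k * real (lambda21 V E) * sqrt (real (card V) / real (card V div 2))"
  proof -
    have "sqrt (real (card V) / real (card V div 2)) \<ge> 1"
      using assms(4) by simp
    then show ?thesis
      using mult_left_mono[of 1 _ "real k * real (lambda21 V E)"] by simp
  qed
  finally show ?thesis .
qed

end
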